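(* Let $\epsilon>0$, $M\ge1$, and let $h^{\mathrm{Dir}}$ be the solution of the Dirichlet problem on ${\mathbb T}^{(M)}$ with the boundary condition $u$ below. Then $$\epsilon^2\,\frac{2^{2M-6}}{(1-2^{-M})^2}\le S_{\mathrm{spr}}(h^{\mathrm{Dir}},{\mathbb T}^{(M)})\le\epsilon^2\,\frac{(2^{M-1}+\tfrac12)^2}{1-2^{-M}}.$$
   Context: Binary tree: for $n\ge0$, $\{0,1\}^n$ is the set of vertices of generation $n$ (words $z=z_1\cdots z_n$; generation $0$ is the root $\emptyset$). For a vertex $z$ of generation $n$, its children are $z0,z1$, and for $0\le m\le n$, $z^{(m)}=z_1\cdots z_m$ is its ancestor in generation $m$. ${\mathbb T}^{(M)}$ is the tree of generations $0,\dots,M$. $S_{\mathrm{spr}}(h,{\mathbb T}^{(M)})=\tfrac12\sum_{n=0}^{M-1}\sum_{z\in\{0,1\}^n}\big[(h(z0)-h(z))^2+(h(z1)-h(z))^2\big]$. Dirichlet problem: given $M\ge1$ and $u:\{0,1\}^M\to\mathbb R$, its solution is the unique $h$ on the vertices of ${\mathbb T}^{(M)}$ with $h(\emptyset)=0$, $h(z)=u(z)$ for $z\in\{0,1\}^M$, and $h(z0)+h(z1)+h(z^{(n-1)})=3h(z)$ for all $z\in\{0,1\}^n$, $1\le n<M$. Boundary condition: $u(z)=\epsilon\sum_{\ell=2}^M2^{M-\ell}z_\ell+\tfrac12\epsilon$ if $z_1=1$, and $u(z)=-\epsilon\sum_{\ell=2}^M2^{M-\ell}z_\ell-\tfrac12\epsilon$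 if $z_1=0$. *)

theory Defs
  imports Complex_Main
begin

text \<open>Vertices of the binary tree are words over {0,1}, represented as bool lists
  (True = 1, False = 0).
  Children of z are z@[False] (= z0) and z@[True] (= z1); the ancestor z^(m) is take m z.\<close>

definition gen :: "nat \<Rightarrow> bool list set" where
  "gen n = {z. length z = n}"

definition tree_vertices :: "nat \<Rightarrow> bool list set" where
  "tree_vertices M = {z. length z \<le> M}"

definition bitval :: "bool \<Rightarrow> real" where
  "bitval b = (if b then 1 else 0)"

definition S_spr :: "(bool list \<Rightarrow> real) \<Rightarrow> nat \<Rightarrow> real" where
  "S_spr h M = (1/2) * (\<Sum>n<M. \<Sum>z\<in>gen n.
      (h (z @ [False]) - h z)\<^sup>2 + (h (z @ [True]) - h z)\<^sup>2)"

definition is_dirichlet_solution ::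
  "nat \<Rightarrow> (bool list \<Rightarrow> real) \<Rightarrow> (bool list \<Rightarrow> real) \<Rightarrow> bool" where
  "is_dirichlet_solution M u h \<longleftrightarrow>
     h [] = 0 \<and>
     (\<forall>z\<in>gen M. h z = u z) \<and>
     (\<forall>n. 1 \<le> n \<and> n < M \<longrightarrow>
        (\<forall>z\<in>gen n. h (z @ [False]) + h (z @ [True]) + h (take (n - 1) z) = 3 * h z))"

definition dirichlet_solution ::
  "nat \<Rightarrow> (bool list \<Rightarrow> real) \<Rightarrow> bool list \<Rightarrow> real" where
  "dirichlet_solution M u = (THE h. is_dirichlet_solution M u h \<and>
       (\<forall>z. z \<notin> tree_vertices M \<longrightarrow> h z = 0))"

text \<open>Boundary condition; z_l is the l-th letter, i.e. z ! (l - 1).\<close>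
definition bdry :: "real \<Rightarrow> nat \<Rightarrow> bool list \<Rightarrow> real" where
  "bdry \<epsilon> M z =
     (if z ! 0 then \<epsilon> * (\<Sum>l=2..M. 2 ^ (M - l) * bitval (z ! (l - 1))) + \<epsilon> / 2
      else - \<epsilon> * (\<Sum>l=2..M. 2 ^ (M - l) * bitval (z ! (l - 1))) - \<epsilon> / 2)"

end

theory Submission
  imports Defs
begin

text \<open>Write s(b) = \<plusminus>1 for the sign of a letter. Up to the factor \<epsilon> s(z_1), the boundary data
  is the Walsh polynomial \<Sum>_{i<M} 2^(M-2-i) w_i(z) with w_0 = 1 and w_i(z) = s(z_{i+1}). Each mode
  extends along the generations by the profile p_i(n) = (1 - 2^(i-n)) / (1 - 2^(i-M)), the solution
  of 2 p(n+1) + p(n-1) = 3 p(n) with p(i) = 0 and p(M) = 1; by the maximum principle the resulting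
  function is the Dirichlet solution. Its increment on the edges into generation n+1 is again a
  Walsh polynomial, so Parseval on {0,1}^(n+1) gives
  S_spr = \<epsilon>^2/2 \<Sum>_n 2^(n+1) \<Sum>_{i\<le>n} (2^(M-n-3) / (1 - 2^(i-M)))^2.
  The two edges at the root alone give the lower bound, and 1 - 2^(i-M) \<ge> 1/2 the upper one.\<close>

lemma finite_gen: "finite (gen n)"
  using finite_lists_length_eq[of "UNIV :: bool set" n] by (simp add: gen_def)

lemma card_gen: "card (gen n) = 2 ^ n"
  using card_lists_length_eq[of "UNIV :: bool set" n] by (simp add: gen_def)

lemma gen_Suc: "gen (Suc n) = (\<lambda>z. z @ [False]) ` gen n \<union> (\<lambda>z. z @ [True]) ` gen n"
proof
  show "gen (Suc n) \<subseteq> (\<lambda>z. z @ [False]) ` gen n \<union> (\<lambda>z. z @ [True]) ` gen n"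
  proof
    fix y assume "y \<in> gen (Suc n)"
    then have "y = butlast y @ [last y]" "butlast y \<in> gen n"
      by (auto simp: gen_def intro!: append_butlast_last_id[symmetric])
    then obtain z b where "y = z @ [b]" "z \<in> gen n"
      by blast
    then show "y \<in> (\<lambda>z. z @ [False]) ` gen n \<union> (\<lambda>z. z @ [True]) ` gen n"
      by (cases b) auto
  qed
qed (auto simp: gen_def)

lemma sum_gen_Suc:
  "(\<Sum>y\<in>gen (Suc n). f y) = (\<Sum>z\<in>gen n. f (z @ [False]) + f (z @ [True]))"
proof -
  have "(\<Sum>y\<in>gen (Suc n). f y)
      = (\<Sum>y\<in>(\<lambda>z. z @ [False]) ` gen n. f y) + (\<Sum>y\<in>(\<lambda>z. z @ [True]) ` gen n. f y)"
    unfolding gen_Suc by (rule sum.union_disjoint) (auto simp: finite_gen)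
  also have "\<dots> = (\<Sum>z\<in>gen n. f (z @ [False])) + (\<Sum>z\<in>gen n. f (z @ [True]))"
    by (simp add: sum.reindex inj_on_def)
  finally show ?thesis
    by (simp add: sum.distrib)
qed

definition bit_sign :: "bool \<Rightarrow> real" where
  "bit_sign b = 2 * bitval b - 1"

lemma bit_sign_simps [simp]: "bit_sign True = 1" "bit_sign False = -1"
  by (simp_all add: bit_sign_def bitval_def)

lemma bit_sign_square [simp]: "(bit_sign b)\<^sup>2 = 1"
  by (cases b) simp_all

definition walsh :: "bool list \<Rightarrow> nat \<Rightarrow> real" where
  "walsh z i = (if i = 0 then 1 else bit_sign (z ! i))"

lemma walsh_snoc: "i < length z \<Longrightarrow> walsh (z @ [b]) i = walsh z i"
  by (simp add: walsh_def nth_append)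

lemma walsh_snoc_last: "walsh (z @ [b]) (length z) = (if z = [] then 1 else bit_sign b)"
  by (simp add: walsh_def)

lemma sum_gen_walsh_square:
  "(\<Sum>y\<in>gen N. (\<Sum>i<N. c i * walsh y i)\<^sup>2) = 2 ^ N * (\<Sum>i<N. (c i)\<^sup>2)"
proof (induction N)
  case 0
  then show ?case by (simp add: gen_def)
next
  case (Suc N)
  define A where "A z = (\<Sum>i<N. c i * walsh z i)" for z
  have snoc: "(\<Sum>i<Suc N. c i * walsh (z @ [b]) i) = A z + c N * walsh (z @ [b]) N"
    if "z \<in> gen N" for z b
    using that by (simp add: A_def gen_def walsh_snoc)
  \<comment> \<open>the two children differ only in the sign of the new coordinate (for N = 0, A vanishes)\<close>
  have children: "(A z + c N * walsh (z @ [False]) N)\<^sup>2 + (A z + c N * walsh (z @ [True]) N)\<^sup>2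
      = 2 * (A z)\<^sup>2 + 2 * (c N)\<^sup>2" if "z \<in> gen N" for z
    using that walsh_snoc_last[of z] by (cases "z = []") (simp_all add: A_def gen_def power2_eq_square algebra_simps)
  have "(\<Sum>y\<in>gen (Suc N). (\<Sum>i<Suc N. c i * walsh y i)\<^sup>2)
      = (\<Sum>z\<in>gen N. 2 * (A z)\<^sup>2 + 2 * (c N)\<^sup>2)"
    unfolding sum_gen_Suc by (intro sum.cong refl) (simp only: snoc children)
  also have "\<dots> = 2 * (\<Sum>z\<in>gen N. (A z)\<^sup>2) + 2 * 2 ^ N * (c N)\<^sup>2"
    by (simp add: sum.distrib sum_distrib_left card_gen)
  also have "\<dots> = 2 * 2 ^ N * (\<Sum>i<N. (c i)\<^sup>2) + 2 * 2 ^ N * (c N)\<^sup>2"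
    by (simp only: A_def Suc.IH)
  finally show ?case
    by (simp add: distrib_left)
qed

lemma subharmonic_seq_nonpos:
  fixes a :: "nat \<Rightarrow> real"
  assumes "a 0 \<le> 0" and "a M \<le> 0"
    and sub: "\<And>n. 1 \<le> n \<Longrightarrow> n < M \<Longrightarrow> 3 * a n \<le> 2 * a (Suc n) + a (n - 1)"
    and "n \<le> M"
  shows "a n \<le> 0"
proof (rule ccontr)
  assume "\<not> a n \<le> 0"
  define m where "m = Max (a ` {..M})"
  have m_ge: "a j \<le> m" if "j \<le> M" for j
    using that by (simp add: m_def)
  have "m > 0"
    using \<open>\<not> a n \<le> 0\<close> m_ge[OF \<open>n \<le> M\<close>] by linarith
  define K where "K = {..M} \<inter> {j. a j = m}"
  have "finite K"
    by (simp add: K_def)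
  have "m \<in> a ` {..M}"
    unfolding m_def by (rule Max_in) auto
  then have "K \<noteq> {}"
    by (auto simp: K_def)
  define k where "k = Max K"
  have k: "k \<le> M" "a k = m"
    using Max_in[OF \<open>finite K\<close> \<open>K \<noteq> {}\<close>] by (auto simp: k_def K_def)
  have "a 0 < a k" "a M < a k"
    using k \<open>m > 0\<close> assms(1,2) by auto
  then have "k \<noteq> 0" "k \<noteq> M"
    by (metis less_irrefl)+
  then have "1 \<le> k" "k < M"
    using k(1) by auto
  have "Suc k \<notin> K"
    using Max_ge[OF \<open>finite K\<close>, of "Suc k"] by (auto simp: k_def)
  then have "a (Suc k) \<noteq> m"
    using \<open>k < M\<close> by (simp add: K_def)
  then have "a (Suc k) < m"
    using m_ge[of "Suc k"] \<open>k < M\<close> by simp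
  moreover have "a (k - 1) \<le> m"
    using m_ge \<open>k < M\<close> by simp
  \<comment> \<open>at the last maximiser the subharmonic inequality fails\<close>
  ultimately show False
    using sub[OF \<open>1 \<le> k\<close> \<open>k < M\<close>] k by linarith
qed

lemma dirichlet_max_principle:
  fixes g :: "bool list \<Rightarrow> real"
  assumes "g [] = 0" and "\<forall>z\<in>gen M. g z = 0"
    and harm: "\<forall>n. 1 \<le> n \<and> n < M \<longrightarrow>
      (\<forall>z\<in>gen n. g (z @ [False]) + g (z @ [True]) + g (take (n - 1) z) = 3 * g z)"
    and "length z \<le> M"
  shows "g z \<le> 0"
proof -
  define a where "a n = Max (g ` gen n)" for n
  have gen_ne: "gen n \<noteq> {}" for n
    by (auto simp: gen_def intro!: exI[of _ "replicate n False"])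
  have a_ge: "g y \<le> a n" if "y \<in> gen n" for y n
    using that finite_gen by (simp add: a_def)
  have a_attained: "\<exists>y\<in>gen n. g y = a n" for n
    using Max_in[of "g ` gen n"] finite_gen gen_ne unfolding a_def by fastforce
  have "a n \<le> 0" if "n \<le> M" for n
  proof (rule subharmonic_seq_nonpos[OF _ _ _ that])
    show "a 0 \<le> 0" "a M \<le> 0"
      using a_attained[of 0] a_attained[of M] assms(1,2) by (auto simp: gen_def)
    fix n assume n: "1 \<le> n" "n < M"
    obtain y where y: "y \<in> gen n" "g y = a n"
      using a_attained by blast
    have "g (y @ [False]) \<le> a (Suc n)" "g (y @ [True]) \<le> a (Suc n)"
      using y by (auto intro!: a_ge simp: gen_def)
    moreover have "g (take (n - 1) y) \<le> a (n - 1)"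
      using y by (intro a_ge) (simp add: gen_def)
    moreover have "g (y @ [False]) + g (y @ [True]) + g (take (n - 1) y) = 3 * a n"
      using harm n y by auto
    ultimately show "3 * a n \<le> 2 * a (Suc n) + a (n - 1)"
      by linarith
  qed
  then show ?thesis
    using a_ge[of z "length z"] \<open>length z \<le> M\<close> by (force simp: gen_def)
qed

lemma dirichlet_solution_unique:
  assumes "is_dirichlet_solution M u h" and "is_dirichlet_solution M u h'" and "length z \<le> M"
  shows "h z = h' z"
proof -
  have le: "g z - g' z \<le> 0" if "is_dirichlet_solution M u g" "is_dirichlet_solution M u g'" for g g'
    using that by (intro dirichlet_max_principle[OF _ _ _ assms(3)])
      (auto simp: is_dirichlet_solution_def algebra_simps)
  show ?thesis
    using le[OF assms(1,2)] le[OF assms(2,1)] by simp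
qed

lemma dirichlet_solution_eq:
  assumes "is_dirichlet_solution M u h" and "length z \<le> M"
  shows "dirichlet_solution M u z = h z"
proof -
  define h' where "h' z = (if length z \<le> M then h z else 0)" for z
  have "is_dirichlet_solution M u h'"
    using assms(1) by (auto simp: is_dirichlet_solution_def h'_def gen_def)
  have "dirichlet_solution M u = h'"
    unfolding dirichlet_solution_def
  proof (rule the_equality)
    fix g assume g: "is_dirichlet_solution M u g \<and> (\<forall>z. z \<notin> tree_vertices M \<longrightarrow> g z = 0)"
    show "g = h'"
    proof
      fix z show "g z = h' z"
        using g dirichlet_solution_unique[OF _ \<open>is_dirichlet_solution M u h'\<close>, of g z]
        by (cases "length z \<le> M") (auto simp: h'_def tree_vertices_def)
    qed
  qed (use \<open>is_dirichlet_solution M u h'\<close> in \<open>auto simp: h'_def tree_vertices_def\<close>)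
  then show ?thesis
    using assms(2) by (simp add: h'_def)
qed

lemma S_spr_cong:
  assumes "\<And>z. length z \<le> M \<Longrightarrow> h z = g z"
  shows "S_spr h M = S_spr g M"
  unfolding S_spr_def using assms by (intro arg_cong[where f = "(*) _"] sum.cong refl) (auto simp: gen_def)

lemma one_minus_inverse_power2_ge_half:
  assumes "0 < k"
  shows "1 / 2 \<le> 1 - 1 / (2 :: real) ^ k"
proof -
  have "(2 :: real) ^ 1 \<le> 2 ^ k"
    using assms by (intro power_increasing) auto
  then show ?thesis
    by (simp add: field_simps)
qed

text \<open>Truncated subtraction makes \<open>profile M i n\<close> vanish for \<open>n \<le> i\<close>, so the sums below may run
  over all \<open>i < M\<close>.\<close>

definition profile :: "nat \<Rightarrow> nat \<Rightarrow> nat \<Rightarrow> real" where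
  "profile M i n = (1 - 1 / 2 ^ (n - i)) / (1 - 1 / 2 ^ (M - i))"

lemma profile_eq_0: "n \<le> i \<Longrightarrow> profile M i n = 0"
  by (simp add: profile_def)

lemma profile_top:
  assumes "i < M"
  shows "profile M i M = 1"
proof -
  have "1 - 1 / (2 :: real) ^ (M - i) \<noteq> 0"
    using assms one_minus_inverse_power2_ge_half[of "M - i"] by auto
  then show ?thesis
    by (simp add: profile_def)
qed

lemma profile_recurrence:
  assumes "i < n"
  shows "2 * profile M i (Suc n) + profile M i (n - 1) = 3 * profile M i n"
proof -
  obtain k where k: "n = Suc (i + k)"
    using assms less_imp_Suc_add by blast
  define a :: real where "a = 2 ^ k"
  have "2 * (1 - 1 / (4 * a)) + (1 - 1 / a) = 3 * (1 - 1 / (2 * a))"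
    by (simp add: a_def field_simps)
  then show ?thesis
    unfolding profile_def k by (simp add: a_def Suc_diff_le add_divide_distrib[symmetric] algebra_simps)
qed

text \<open>At the root \<open>z ! 0\<close> is unspecified, but there every profile vanishes.\<close>

definition walsh_harmonic :: "(nat \<Rightarrow> real) \<Rightarrow> nat \<Rightarrow> bool list \<Rightarrow> real" where
  "walsh_harmonic c M z = bit_sign (z ! 0) * (\<Sum>i<M. c i * profile M i (length z) * walsh z i)"

lemma walsh_harmonic_take:
  assumes "m \<le> length z"
  shows "walsh_harmonic c M (take m z) = bit_sign (z ! 0) * (\<Sum>i<M. c i * profile M i m * walsh z i)"
proof (cases "m = 0")
  case True
  then show ?thesis
    by (simp add: walsh_harmonic_def profile_eq_0)
next
  case False
  have "walsh (take m z) i = walsh z i \<or> profile M i m = 0" for i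
    by (cases "i < m") (simp_all add: walsh_def profile_eq_0)
  then have "(\<Sum>i<M. c i * profile M i m * walsh (take m z) i) = (\<Sum>i<M. c i * profile M i m * walsh z i)"
    by (intro sum.cong refl) (metis mult_zero_left mult_zero_right)
  then show ?thesis
    using False assms by (simp add: walsh_harmonic_def min_def)
qed

lemma walsh_harmonic_Nil: "walsh_harmonic c M [] = 0"
  by (simp add: walsh_harmonic_def profile_eq_0)

lemma walsh_harmonic_boundary:
  "z \<in> gen M \<Longrightarrow> walsh_harmonic c M z = bit_sign (z ! 0) * (\<Sum>i<M. c i * walsh z i)"
  by (simp add: walsh_harmonic_def gen_def profile_top)

lemma walsh_harmonic_mean_value:
  fixes c :: "nat \<Rightarrow> real" and M :: nat
  assumes "z \<in> gen n" and "1 \<le> n"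
  defines "h \<equiv> walsh_harmonic c M"
  shows "h (z @ [False]) + h (z @ [True]) + h (take (n - 1) z) = 3 * h z"
proof -
  have len: "length z = n" and "z \<noteq> []"
    using assms(1,2) by (auto simp: gen_def)
  have child: "h (z @ [b]) = bit_sign (z ! 0) * (\<Sum>i<M. c i * profile M i (Suc n) * walsh (z @ [b]) i)" for b
    using walsh_harmonic_take[of "Suc n" "z @ [b]" c M] len assms(2) by (simp add: h_def nth_append)
  have parent: "h (take (n - 1) z) = bit_sign (z ! 0) * (\<Sum>i<M. c i * profile M i (n - 1) * walsh z i)"
    using walsh_harmonic_take[of "n - 1" z c M] len by (simp add: h_def)
  have self: "h z = bit_sign (z ! 0) * (\<Sum>i<M. c i * profile M i n * walsh z i)"
    using walsh_harmonic_take[of n z c M] len by (simp add: h_def)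
  have termwise: "c i * profile M i (Suc n) * walsh (z @ [False]) i + c i * profile M i (Suc n) * walsh (z @ [True]) i
      + c i * profile M i (n - 1) * walsh z i = 3 * (c i * profile M i n * walsh z i)" for i
  proof (cases i n rule: linorder_cases)
    case less
    have "walsh (z @ [b]) i = walsh z i" for b
      using less len by (simp add: walsh_snoc)
    then have "c i * profile M i (Suc n) * walsh (z @ [False]) i + c i * profile M i (Suc n) * walsh (z @ [True]) i
        + c i * profile M i (n - 1) * walsh z i
        = c i * walsh z i * (2 * profile M i (Suc n) + profile M i (n - 1))"
      by (simp add: algebra_simps)
    then show ?thesis
      unfolding profile_recurrence[OF less] by simp
  next
    case equal
    \<comment> \<open>the new coordinate takes both signs among the children\<close>
    then show ?thesis
      using walsh_snoc_last[of z] len \<open>z \<noteq> []\<close> by (simp add: profile_eq_0)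
  next
    case greater
    then show ?thesis
      by (simp add: profile_eq_0)
  qed
  have "h (z @ [False]) + h (z @ [True]) + h (take (n - 1) z) = bit_sign (z ! 0) *
      (\<Sum>i<M. c i * profile M i (Suc n) * walsh (z @ [False]) i
        + c i * profile M i (Suc n) * walsh (z @ [True]) i + c i * profile M i (n - 1) * walsh z i)"
    unfolding child parent by (simp add: sum.distrib distrib_left)
  also have "\<dots> = 3 * h z"
    unfolding self termwise by (simp add: sum_distrib_left[symmetric])
  finally show ?thesis .
qed

lemma is_dirichlet_solution_walsh_harmonic:
  assumes "\<And>z. z \<in> gen M \<Longrightarrow> u z = bit_sign (z ! 0) * (\<Sum>i<M. c i * walsh z i)"
  shows "is_dirichlet_solution M u (walsh_harmonic c M)"
  unfolding is_dirichlet_solution_def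
  using assms walsh_harmonic_Nil walsh_harmonic_boundary walsh_harmonic_mean_value by auto

lemma walsh_harmonic_increment:
  assumes "z \<in> gen n"
  shows "walsh_harmonic c M (z @ [b]) - walsh_harmonic c M z
    = bit_sign ((z @ [b]) ! 0) * (\<Sum>i<M. c i * (profile M i (Suc n) - profile M i n) * walsh (z @ [b]) i)"
proof -
  have "length z = n"
    using assms by (simp add: gen_def)
  then have "walsh_harmonic c M (z @ [b]) - walsh_harmonic c M z = bit_sign ((z @ [b]) ! 0) *
      ((\<Sum>i<M. c i * profile M i (Suc n) * walsh (z @ [b]) i) - (\<Sum>i<M. c i * profile M i n * walsh (z @ [b]) i))"
    using walsh_harmonic_take[of "Suc n" "z @ [b]" c M] walsh_harmonic_take[of n "z @ [b]" c M]
    by (simp add: right_diff_distrib)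
  then show ?thesis
    by (simp add: sum_subtractf[symmetric] algebra_simps)
qed

lemma S_spr_walsh_harmonic:
  "S_spr (walsh_harmonic c M) M
    = 1 / 2 * (\<Sum>n<M. 2 ^ Suc n * (\<Sum>i<Suc n. (c i * (profile M i (Suc n) - profile M i n))\<^sup>2))"
proof -
  define d where "d n i = c i * (profile M i (Suc n) - profile M i n)" for n i
  have level: "(\<Sum>z\<in>gen n. (walsh_harmonic c M (z @ [False]) - walsh_harmonic c M z)\<^sup>2
      + (walsh_harmonic c M (z @ [True]) - walsh_harmonic c M z)\<^sup>2) = 2 ^ Suc n * (\<Sum>i<Suc n. (d n i)\<^sup>2)"
    if "n < M" for n
  proof -
    \<comment> \<open>coordinates beyond the current generation carry no weight yet\<close>
    have "(\<Sum>i<M. d n i * walsh y i) = (\<Sum>i<Suc n. d n i * walsh y i)" for y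
      using that by (intro sum.mono_neutral_right) (auto simp: d_def profile_eq_0)
    then have "(walsh_harmonic c M (z @ [b]) - walsh_harmonic c M z)\<^sup>2 = (\<Sum>i<Suc n. d n i * walsh (z @ [b]) i)\<^sup>2"
      if "z \<in> gen n" for z b
      using walsh_harmonic_increment[OF that, of c M b] by (simp add: d_def power_mult_distrib)
    then have "(\<Sum>z\<in>gen n. (walsh_harmonic c M (z @ [False]) - walsh_harmonic c M z)\<^sup>2
        + (walsh_harmonic c M (z @ [True]) - walsh_harmonic c M z)\<^sup>2)
        = (\<Sum>y\<in>gen (Suc n). (\<Sum>i<Suc n. d n i * walsh y i)\<^sup>2)"
      unfolding sum_gen_Suc by (intro sum.cong) simp_all
    then show ?thesis
      by (simp only: sum_gen_walsh_square)
  qed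
  show ?thesis
    unfolding S_spr_def using level by (simp add: d_def)
qed

definition bdry_coeff :: "real \<Rightarrow> nat \<Rightarrow> nat \<Rightarrow> real" where
  "bdry_coeff \<epsilon> M i = \<epsilon> * 2 ^ (M - 1 - i) / 2"

lemma sum_power2_reversed: "(\<Sum>k<K. (2::real) ^ (K - Suc k)) = 2 ^ K - 1"
  using sum.nat_diff_reindex[of "\<lambda>k. (2::real) ^ k" K] geometric_sum[of "2::real" K] by simp

lemma bdry_eq_walsh:
  assumes "1 \<le> M" and "z \<in> gen M"
  shows "bdry \<epsilon> M z = bit_sign (z ! 0) * (\<Sum>i<M. bdry_coeff \<epsilon> M i * walsh z i)"
proof -
  obtain K where M: "M = Suc K"
    using assms(1) by (cases M) auto
  define S where "S = (\<Sum>l=2..M. 2 ^ (M - l) * bitval (z ! (l - 1)))"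
  have S_shift: "S = (\<Sum>k<K. 2 ^ (K - Suc k) * bitval (z ! Suc k))"
    unfolding S_def M numeral_2_eq_2 sum.shift_bounds_cl_Suc_ivl sum.atLeast1_atMost_eq by simp
  have "(\<Sum>i<M. bdry_coeff 1 M i * walsh z i)
      = 2 ^ K / 2 + (\<Sum>k<K. 2 ^ (K - Suc k) * bitval (z ! Suc k) - 2 ^ (K - Suc k) / 2)"
    unfolding M sum.lessThan_Suc_shift
    by (simp add: bdry_coeff_def walsh_def bit_sign_def field_simps)
  also have "\<dots> = S + 1 / 2"
    unfolding S_shift sum_subtractf sum_divide_distrib[symmetric] sum_power2_reversed by (simp add: field_simps)
  moreover have "bdry_coeff \<epsilon> M i = \<epsilon> * bdry_coeff 1 M i" for i
    by (simp add: bdry_coeff_def)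
  ultimately have "(\<Sum>i<M. bdry_coeff \<epsilon> M i * walsh z i) = \<epsilon> * (S + 1 / 2)"
    by (simp add: mult.assoc sum_distrib_left[symmetric])
  then show ?thesis
    unfolding bdry_def S_def[symmetric] by (simp add: algebra_simps)
qed

lemma bdry_coeff_increment:
  assumes "i \<le> n" and "n < M"
  shows "bdry_coeff \<epsilon> M i * (profile M i (Suc n) - profile M i n)
    = \<epsilon> * (2 ^ M / (8 * 2 ^ n * (1 - 1 / 2 ^ (M - i))))"
proof -
  define D :: real where "D = 1 - 1 / 2 ^ (M - i)"
  have "D \<noteq> 0"
    using assms one_minus_inverse_power2_ge_half[of "M - i"] by (simp add: D_def)
  have "(2 :: real) ^ (Suc n - i) = 2 * 2 ^ n / 2 ^ i" "(2 :: real) ^ (n - i) = 2 ^ n / 2 ^ i"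
    using assms(1) by (simp_all add: power_diff)
  note powers = this
  have diff: "profile M i (Suc n) - profile M i n = 2 ^ i / (2 * 2 ^ n * D)"
    using \<open>D \<noteq> 0\<close> unfolding profile_def D_def[symmetric] powers by (simp add: field_simps)
  have "(2 :: real) ^ (M - 1 - i) = 2 ^ M / (2 * 2 ^ i)"
    using assms by (simp add: power_diff)
  then have coeff: "bdry_coeff \<epsilon> M i = \<epsilon> * 2 ^ M / (4 * 2 ^ i)"
    by (simp add: bdry_coeff_def)
  show ?thesis
    unfolding diff coeff D_def[symmetric] by (simp add: field_simps)
qed

lemma S_spr_bdry:
  assumes "1 \<le> M"
  shows "S_spr (dirichlet_solution M (bdry \<epsilon> M)) M
    = \<epsilon>\<^sup>2 / 2 * (\<Sum>n<M. 2 ^ Suc n * (\<Sum>i<Suc n. (2 ^ M / (8 * 2 ^ n * (1 - 1 / 2 ^ (M - i))))\<^sup>2))"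
proof -
  define q where "q n i = (2 :: real) ^ M / (8 * 2 ^ n * (1 - 1 / 2 ^ (M - i)))" for n i
  have sol: "is_dirichlet_solution M (bdry \<epsilon> M) (walsh_harmonic (bdry_coeff \<epsilon> M) M)"
    using bdry_eq_walsh[OF assms] by (intro is_dirichlet_solution_walsh_harmonic) simp
  have "S_spr (dirichlet_solution M (bdry \<epsilon> M)) M = S_spr (walsh_harmonic (bdry_coeff \<epsilon> M) M) M"
    using dirichlet_solution_eq[OF sol] by (rule S_spr_cong)
  also have "\<dots> = 1 / 2 * (\<Sum>n<M. 2 ^ Suc n * (\<Sum>i<Suc n. (\<epsilon> * q n i)\<^sup>2))"
    unfolding S_spr_walsh_harmonic q_def
    by (intro arg_cong[where f = "(*) _"] sum.cong refl) (simp add: bdry_coeff_increment)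
  also have "\<dots> = \<epsilon>\<^sup>2 / 2 * (\<Sum>n<M. 2 ^ Suc n * (\<Sum>i<Suc n. (q n i)\<^sup>2))"
    by (simp add: power_mult_distrib sum_distrib_left mult_ac del: sum.lessThan_Suc)
  finally show ?thesis
    by (simp only: q_def)
qed

lemma sum_Suc_div_power2: "(\<Sum>n<M. (real n + 1) / 2 ^ n) = 4 - (2 * real M + 4) / 2 ^ M"
proof (induction M)
  case (Suc M)
  have "(\<Sum>n<Suc M. (real n + 1) / 2 ^ n) = 4 - (2 * real M + 4) / 2 ^ M + (real M + 1) / 2 ^ M"
    using Suc.IH by simp
  also have "\<dots> = 4 - (2 * real (Suc M) + 4) / 2 ^ Suc M"
    by (simp add: field_simps)
  finally show ?case .
qed simp

lemma S_spr_bdry_ge: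
  assumes "1 \<le> M"
  shows "\<epsilon>\<^sup>2 * ((2 ^ M)\<^sup>2 / 64 / (1 - 1 / 2 ^ M)\<^sup>2) \<le> S_spr (dirichlet_solution M (bdry \<epsilon> M)) M"
proof -
  \<comment> \<open>the two edges at the root already carry this much energy\<close>
  have "2 * (2 ^ M / (8 * (1 - 1 / 2 ^ M)))\<^sup>2
      \<le> (\<Sum>n<M. 2 ^ Suc n * (\<Sum>i<Suc n. (2 ^ M / (8 * 2 ^ n * (1 - 1 / 2 ^ (M - i))))\<^sup>2 :: real))"
    using member_le_sum[of 0 "{..<M}" "\<lambda>n. 2 ^ Suc n * (\<Sum>i<Suc n. (2 ^ M / (8 * 2 ^ n * (1 - 1 / 2 ^ (M - i))))\<^sup>2 :: real)"]
      assms by (simp add: sum_nonneg)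
  then have "\<epsilon>\<^sup>2 / 2 * (2 * (2 ^ M / (8 * (1 - 1 / 2 ^ M)))\<^sup>2) \<le> S_spr (dirichlet_solution M (bdry \<epsilon> M)) M"
    unfolding S_spr_bdry[OF assms] by (rule mult_left_mono) simp
  then show ?thesis
    by (simp add: power_divide power_mult_distrib del: right_diff_distrib_numeral)
qed

lemma S_spr_bdry_le:
  assumes "1 \<le> M"
  shows "S_spr (dirichlet_solution M (bdry \<epsilon> M)) M \<le> \<epsilon>\<^sup>2 * (2 ^ M)\<^sup>2 / 4"
proof -
  have "(2 ^ M / (8 * 2 ^ n * (1 - 1 / 2 ^ (M - i))))\<^sup>2 \<le> (2 ^ M / (4 * 2 ^ n) :: real)\<^sup>2"
    if "i < M" for n i
  proof -
    have "1 / 2 \<le> 1 - 1 / (2 :: real) ^ (M - i)"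
      using that by (intro one_minus_inverse_power2_ge_half) simp
    then have "2 ^ M / (8 * 2 ^ n * (1 - 1 / 2 ^ (M - i))) \<le> (2 ^ M / (8 * 2 ^ n * (1 / 2)) :: real)"
      by (intro divide_left_mono mult_left_mono) auto
    then show ?thesis
      by (simp add: power_mono)
  qed
  then have "(\<Sum>n<M. 2 ^ Suc n * (\<Sum>i<Suc n. (2 ^ M / (8 * 2 ^ n * (1 - 1 / 2 ^ (M - i))))\<^sup>2))
      \<le> (\<Sum>n<M. 2 ^ Suc n * (\<Sum>i<Suc n. (2 ^ M / (4 * 2 ^ n) :: real)\<^sup>2))"
    by (intro sum_mono mult_left_mono) auto
  also have "\<dots> = (2 ^ M)\<^sup>2 / 8 * (\<Sum>n<M. (real n + 1) / 2 ^ n)"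
    unfolding sum_distrib_left by (intro sum.cong refl) (simp add: field_simps power2_eq_square)
  also have "\<dots> \<le> (2 ^ M)\<^sup>2 / 2"
    unfolding sum_Suc_div_power2 by simp
  finally show ?thesis
    unfolding S_spr_bdry[OF assms] by (auto dest: mult_left_mono[where c = "\<epsilon>\<^sup>2 / 2"])
qed

theorem lemma2p5:
  fixes \<epsilon> :: real and M :: nat
  assumes "\<epsilon> > 0" and "M \<ge> 1"
  shows "\<epsilon>\<^sup>2 * ((2::real) powr (2 * real M - 6) / (1 - 2 powr (- real M))\<^sup>2)
           \<le> S_spr (dirichlet_solution M (bdry \<epsilon> M)) M
       \<and> S_spr (dirichlet_solution M (bdry \<epsilon> M)) M
           \<le> \<epsilon>\<^sup>2 * ((2 ^ (M - 1) + 1/2)\<^sup>2 / (1 - 2 powr (- real M)))"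
proof -
  have "(2 :: real) powr (2 * real M - 6) = 2 powr real (2 * M) / 2 powr 6"
    by (simp add: powr_diff)
  also have "\<dots> = (2 ^ M)\<^sup>2 / 64"
    by (simp add: powr_realpow power_even_eq del: of_nat_mult)
  finally have powr_M: "(2 :: real) powr (2 * real M - 6) = (2 ^ M)\<^sup>2 / 64" .
  have powr_minus_M: "(2 :: real) powr (- real M) = 1 / 2 ^ M"
    by (simp add: powr_minus powr_realpow divide_inverse)
  have "1 / 2 \<le> 1 - 1 / (2 :: real) ^ M" "1 - 1 / (2 :: real) ^ M \<le> 1"
    using one_minus_inverse_power2_ge_half[of M] assms(2) by auto
  have "((2 :: real) ^ M / 2)\<^sup>2 \<le> (2 ^ (M - 1) + 1 / 2)\<^sup>2"
    using assms(2) by (intro power_mono) (simp_all add: power_diff)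
  also have "\<dots> \<le> (2 ^ (M - 1) + 1 / 2)\<^sup>2 / (1 - 1 / 2 ^ M)"
    using \<open>1 / 2 \<le> 1 - 1 / 2 ^ M\<close> \<open>1 - 1 / 2 ^ M \<le> 1\<close> by (simp add: le_divide_eq mult_left_le)
  finally have "\<epsilon>\<^sup>2 * (2 ^ M)\<^sup>2 / 4 \<le> \<epsilon>\<^sup>2 * ((2 ^ (M - 1) + 1 / 2)\<^sup>2 / (1 - 1 / 2 ^ M))"
    by (simp add: mult_left_mono power_divide flip: times_divide_eq_right)
  then show ?thesis
    using S_spr_bdry_ge[OF assms(2), of \<epsilon>] S_spr_bdry_le[OF assms(2), of \<epsilon>]
    unfolding powr_M powr_minus_M by linarith
qed

end
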